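(* Let $n\ge 3$, let $d_1,\dots,d_{n-1}>0$, and let $k_1,\dots,k_{n-1}$ be real gains with $k_1+1>k_2$, $k_i>k_{i+1}$ for $i=2,\ldots,n-2$, and $k_{n-1}>0$. Define $f:\mathbb{R}^{n-1}\to\mathbb{R}^{n-1}$, writing $s_i(z)=\mathrm{sgn}(z_i)\,\mathrm{sgn}(|z_i|-d_i)$, by $$f_1(z)=-(k_1+1)s_1(z)+k_2 s_2(z),$$ $$f_i(z)=s_{i-1}(z)-(k_i+1)s_i(z)+k_{i+1}s_{i+1}(z),\quad i=2,\ldots,n-2,$$ $$f_{n-1}(z)=s_{n-2}(z)-(k_{n-1}+1)s_{n-1}(z).$$ Let $i\in\{2,\ldots,n-2\}$ and $z\in\mathbb{R}^{n-1}$. If $|z_j|\,\big||z_j|-d_j\big|=0$ for $j=1,\ldots,i-1$ and $\mathbf{0}\in\mathcal{K}(f(z))$, then $|z_i|\,\big||z_i|-d_i\big|=0$.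
   Context: The sign function is $\mathrm{sgn}(z)=+1$ if $z\ge 0$ and $\mathrm{sgn}(z)=-1$ if $z<0$. For a (possibly discontinuous) vector field $f$, $\mathcal{K}(f(z))=\bigcap_{\delta>0}\overline{\mathrm{co}}\,(f(B(z,\delta)))$, where $\overline{\mathrm{co}}$ denotes the closed convex hull and $B(z,\delta)$ the open ball of radius $\delta$ centered at $z$. *)

theory Defs
  imports "HOL-Analysis.Analysis"
begin

definition sgnp :: "real \<Rightarrow> real" where
  "sgnp x = (if x \<ge> 0 then 1 else -1)"

definition filippov :: "('a::euclidean_space \<Rightarrow> 'b::euclidean_space) \<Rightarrow> 'a \<Rightarrow> 'b set" where
  "filippov F z = (\<Inter>\<delta>\<in>{0<..}. closure (convex hull (F ` ball z \<delta>)))"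

text \<open>R^(n-1) is represented as real^'m, where the enumeration e :: nat \<Rightarrow> 'm is a
  bijection from {1..n-1} onto the index type; coordinate z_j is z $ e j.\<close>
definition sfun :: "(nat \<Rightarrow> real) \<Rightarrow> (nat \<Rightarrow> 'm) \<Rightarrow> real^'m \<Rightarrow> nat \<Rightarrow> real" where
  "sfun d e z j = sgnp (z $ e j) * sgnp (\<bar>z $ e j\<bar> - d j)"

definition fcomp :: "nat \<Rightarrow> (nat \<Rightarrow> real) \<Rightarrow> (nat \<Rightarrow> real) \<Rightarrow> (nat \<Rightarrow> 'm) \<Rightarrow> real^'m \<Rightarrow> nat \<Rightarrow> real" where
  "fcomp n k d e z j =
     (if j = 1 then 0 else sfun d e z (j - 1))
     - (k j + 1) * sfun d e z j
     + (if j = n - 1 then 0 else k (j + 1) * sfun d e z (j + 1))"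

definition fvec :: "nat \<Rightarrow> (nat \<Rightarrow> real) \<Rightarrow> (nat \<Rightarrow> real) \<Rightarrow> (nat \<Rightarrow> 'm::finite) \<Rightarrow> real^'m \<Rightarrow> real^'m" where
  "fvec n k d e z = (\<chi> m. fcomp n k d e z (inv_into {1..n-1} e m))"

end

theory Submission
  imports Defs
begin

text \<open>Away from the switching set of z_i the sign s_i is locally constant, say equal to \<sigma>.
  Since |s_(i-1)| = |s_(i+1)| = 1 and k_(i+1) > 0, the product \<sigma> f_i is then bounded by
  1 - (k_i + 1) + k_(i+1) = k_(i+1) - k_i < 0 on a whole ball around z, so f maps the ball into
  a closed half-space missing 0, and so does the Filippov regularisation.\<close>

lemma filippov_subset:
  assumes "\<delta> > 0" and "F ` ball z \<delta> \<subseteq> S" and "closed S" and "convex S"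
  shows "filippov F z \<subseteq> S"
proof -
  have "closure (convex hull (F ` ball z \<delta>)) \<subseteq> S"
    using assms(2-4) by (intro closure_minimal hull_minimal) auto
  then show ?thesis
    using \<open>\<delta> > 0\<close> unfolding filippov_def by blast
qed

lemma abs_sgnp [simp]: "\<bar>sgnp x\<bar> = 1"
  by (simp add: sgnp_def)

lemma sgnp_eq_if_dist_less:
  assumes "\<bar>y - x\<bar> < \<bar>x\<bar>"
  shows "sgnp y = sgnp x"
  using assms unfolding sgnp_def by auto

lemma abs_sfun [simp]: "\<bar>sfun d e z j\<bar> = 1"
  by (simp add: sfun_def abs_mult)

lemma sfun_locally_constant:
  assumes "\<bar>z $ e j\<bar> * \<bar>\<bar>z $ e j\<bar> - d j\<bar> \<noteq> 0"
  obtains \<delta> where "\<delta> > 0" and "\<And>y. y \<in> ball z \<delta> \<Longrightarrow> sfun d e y j = sfun d e z j"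
proof
  let ?\<delta> = "min \<bar>z $ e j\<bar> \<bar>\<bar>z $ e j\<bar> - d j\<bar>"
  show "?\<delta> > 0"
    using assms by auto
  fix y
  assume "y \<in> ball z ?\<delta>"
  then have "\<bar>y $ e j - z $ e j\<bar> < ?\<delta>"
    using component_le_norm_cart[of "y - z" "e j"] by (simp add: dist_norm norm_minus_commute)
  moreover have "\<bar>(\<bar>y $ e j\<bar> - d j) - (\<bar>z $ e j\<bar> - d j)\<bar> \<le> \<bar>y $ e j - z $ e j\<bar>"
    by (simp add: abs_triangle_ineq3)
  ultimately have "sgnp (y $ e j) = sgnp (z $ e j)"
    and "sgnp (\<bar>y $ e j\<bar> - d j) = sgnp (\<bar>z $ e j\<bar> - d j)"
    by (auto intro!: sgnp_eq_if_dist_less)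
  then show "sfun d e y j = sfun d e z j"
    by (simp add: sfun_def)
qed

lemma fvec_nth:
  assumes "bij_betw e {1..n-1} UNIV" and "j \<in> {1..n-1}"
  shows "fvec n k d e z $ e j = fcomp n k d e z j"
  using assms by (simp add: fvec_def bij_betw_def inv_into_f_f)

lemma gains_pos:
  fixes k :: "nat \<Rightarrow> real"
  assumes "\<forall>j\<in>{2..n-2}. k j > k (j + 1)" and "k (n - 1) > 0"
    and "2 \<le> m" and "m \<le> n - 1"
  shows "k m > 0"
  using assms(3,4)
proof (induction "n - 1 - m" arbitrary: m)
  case 0
  then have "m = n - 1"
    by simp
  then show ?case
    using assms(2) by simp
next
  case (Suc l)
  then have "k (m + 1) > 0" and "m \<in> {2..n-2}"
    by auto
  with assms(1) show ?case
    by force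
qed

lemma sfun_mult_fcomp_le:
  assumes "1 < j" and "j < n - 1" and "k (j + 1) \<ge> 0"
  shows "sfun d e z j * fcomp n k d e z j \<le> k (j + 1) - k j"
proof -
  let ?s = "sfun d e z"
  have "?s j * fcomp n k d e z j = ?s j * ?s (j - 1) - (k j + 1) + k (j + 1) * (?s j * ?s (j + 1))"
    using assms(1,2) abs_sfun[of d e z j] by (auto simp: fcomp_def algebra_simps abs_if split: if_splits)
  moreover have "?s j * ?s (j - 1) \<le> 1" and "?s j * ?s (j + 1) \<le> 1"
    using abs_sfun by (metis abs_ge_self abs_mult mult_1_left)+
  ultimately show ?thesis
    using mult_left_le[OF _ assms(3)] by fastforce
qed

theorem lemma1:
  fixes n i :: nat and d k :: "nat \<Rightarrow> real" and e :: "nat \<Rightarrow> 'm::finite" and z :: "real^'m"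
  assumes "n \<ge> 3"
    and "\<forall>j\<in>{1..n-1}. d j > 0"
    and "k 1 + 1 > k 2"
    and "\<forall>j\<in>{2..n-2}. k j > k (j + 1)"
    and "k (n - 1) > 0"
    and "bij_betw e {1..n-1} UNIV"
    and "i \<in> {2..n-2}"
    and "\<forall>j\<in>{1..i-1}. \<bar>z $ e j\<bar> * \<bar>\<bar>z $ e j\<bar> - d j\<bar> = 0"
    and "0 \<in> filippov (fvec n k d e) z"
  shows "\<bar>z $ e i\<bar> * \<bar>\<bar>z $ e i\<bar> - d i\<bar> = 0"
proof (rule ccontr)
  assume "\<bar>z $ e i\<bar> * \<bar>\<bar>z $ e i\<bar> - d i\<bar> \<noteq> 0"
  then obtain \<delta> where "\<delta> > 0" and const: "\<And>y. y \<in> ball z \<delta> \<Longrightarrow> sfun d e y i = sfun d e z i"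
    using sfun_locally_constant by blast
  let ?\<sigma> = "sfun d e z i"
  let ?S = "{x :: real^'m. inner (axis (e i) ?\<sigma>) x \<le> k (i + 1) - k i}"
  have "k (i + 1) > 0"
    using gains_pos[OF assms(4,5)] assms(7) by auto
  then have "sfun d e y i * fcomp n k d e y i \<le> k (i + 1) - k i" for y
    using assms(7) sfun_mult_fcomp_le[of i n k d e y] by auto
  then have "fvec n k d e ` ball z \<delta> \<subseteq> ?S"
    using assms(6,7) const[symmetric] by (force simp: inner_axis' fvec_nth)
  then have "0 \<in> ?S"
    using filippov_subset[OF \<open>\<delta> > 0\<close> _ closed_halfspace_le convex_halfspace_le] assms(9) by blast
  moreover have "k (i + 1) < k i"
    using assms(4,7) by blast
  ultimately show False
    by simp
qed

end
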